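(* Let $A$ be a partial ring. For every $a\in A$, the subset $D(a)$ of $X_A$ is quasi-compact. In particular $X_A$ is quasi-compact.
   Context: A partial ring is a set $A$ with $0$, a set $A_2\subseteq A\times A$ of summable pairs and a partial addition $+\colon A_2\to A$ (with $0$ a unit summable with everything, commutative, and associative in the sense: $(a,b),(a+b,c)\in A_2$ iff $(b,c),(a,b+c)\in A_2$, and then $(a+b)+c=a+(b+c)$), together with a commutative associative multiplication with unit $1$ such that $0\cdot a=0$ and $(a_1,a_2)\in A_2\Rightarrow(a_1x,a_2x)\in A_2$, $(a_1+a_2)x=a_1x+a_2x$. An ideal is a subset $I\ni 0$ closed under sums of pairs in $A_2\cap(I\times I)$ and with $AI\subseteq I$; a prime ideal is an ideal $I\neq A$ with $ab\in I\Rightarrow a\in I$ or $b\in I$. $X_A$ is the set of prime ideals of $A$; for $a\in A$, $D(a)=\{\mathfrak{p}\in X_A: a\notin\mathfrak{p}\}$; $X_A$ carries the topology generated by the sets $D(a)$, $a\in A$. *)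

theory Defs
  imports "HOL-Analysis.Analysis"
begin

text \<open>A partial ring on the carrier A: S is the set of summable pairs, add the partial
  addition (only meaningful on S), mul the multiplication, z the zero and u the unit.\<close>

definition partial_ring ::
  "'a set \<Rightarrow> ('a \<times> 'a) set \<Rightarrow> ('a \<Rightarrow> 'a \<Rightarrow> 'a) \<Rightarrow> ('a \<Rightarrow> 'a \<Rightarrow> 'a) \<Rightarrow> 'a \<Rightarrow> 'a \<Rightarrow> bool"
where
  "partial_ring A S add mul z u \<longleftrightarrow>
     z \<in> A \<and> u \<in> A \<and> S \<subseteq> A \<times> A \<and>
     (\<forall>(a, b) \<in> S. add a b \<in> A) \<and>
     (\<forall>a \<in> A. \<forall>b \<in> A. mul a b \<in> A) \<and>
     \<comment> \<open>0 is a unit summable with everything\<close>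
     (\<forall>a \<in> A. (a, z) \<in> S \<and> add a z = a) \<and>
     \<comment> \<open>commutativity\<close>
     (\<forall>a b. (a, b) \<in> S \<longrightarrow> (b, a) \<in> S \<and> add a b = add b a) \<and>
     \<comment> \<open>associativity\<close>
     (\<forall>a \<in> A. \<forall>b \<in> A. \<forall>c \<in> A.
        (((a, b) \<in> S \<and> (add a b, c) \<in> S) \<longleftrightarrow> ((b, c) \<in> S \<and> (a, add b c) \<in> S)) \<and>
        ((a, b) \<in> S \<and> (add a b, c) \<in> S \<longrightarrow> add (add a b) c = add a (add b c))) \<and>
     \<comment> \<open>multiplication: commutative, associative, unit u, z absorbing\<close>
     (\<forall>a \<in> A. \<forall>b \<in> A. mul a b = mul b a) \<and>
     (\<forall>a \<in> A. \<forall>b \<in> A. \<forall>c \<in> A. mul (mul a b) c = mul a (mul b c)) \<and>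
     (\<forall>a \<in> A. mul u a = a) \<and>
     (\<forall>a \<in> A. mul z a = z) \<and>
     \<comment> \<open>distributivity\<close>
     (\<forall>a1 a2 x. (a1, a2) \<in> S \<and> x \<in> A \<longrightarrow>
        (mul a1 x, mul a2 x) \<in> S \<and> mul (add a1 a2) x = add (mul a1 x) (mul a2 x))"

definition pr_ideal ::
  "'a set \<Rightarrow> ('a \<times> 'a) set \<Rightarrow> ('a \<Rightarrow> 'a \<Rightarrow> 'a) \<Rightarrow> ('a \<Rightarrow> 'a \<Rightarrow> 'a) \<Rightarrow> 'a \<Rightarrow> 'a set \<Rightarrow> bool"
where
  "pr_ideal A S add mul z I \<longleftrightarrow>
     I \<subseteq> A \<and> z \<in> I \<and>
     (\<forall>a b. (a, b) \<in> S \<and> a \<in> I \<and> b \<in> I \<longrightarrow> add a b \<in> I) \<and>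
     (\<forall>a \<in> A. \<forall>x \<in> I. mul a x \<in> I)"

definition pr_prime_ideal ::
  "'a set \<Rightarrow> ('a \<times> 'a) set \<Rightarrow> ('a \<Rightarrow> 'a \<Rightarrow> 'a) \<Rightarrow> ('a \<Rightarrow> 'a \<Rightarrow> 'a) \<Rightarrow> 'a \<Rightarrow> 'a set \<Rightarrow> bool"
where
  "pr_prime_ideal A S add mul z P \<longleftrightarrow>
     pr_ideal A S add mul z P \<and> P \<noteq> A \<and>
     (\<forall>a \<in> A. \<forall>b \<in> A. mul a b \<in> P \<longrightarrow> a \<in> P \<or> b \<in> P)"

definition pr_spec ::
  "'a set \<Rightarrow> ('a \<times> 'a) set \<Rightarrow> ('a \<Rightarrow> 'a \<Rightarrow> 'a) \<Rightarrow> ('a \<Rightarrow> 'a \<Rightarrow> 'a) \<Rightarrow> 'a \<Rightarrow> 'a set set"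
where
  "pr_spec A S add mul z = {P. pr_prime_ideal A S add mul z P}"

definition pr_D ::
  "'a set \<Rightarrow> ('a \<times> 'a) set \<Rightarrow> ('a \<Rightarrow> 'a \<Rightarrow> 'a) \<Rightarrow> ('a \<Rightarrow> 'a \<Rightarrow> 'a) \<Rightarrow> 'a \<Rightarrow> 'a \<Rightarrow> 'a set set"
where
  "pr_D A S add mul z a = {P \<in> pr_spec A S add mul z. a \<notin> P}"

definition pr_zariski ::
  "'a set \<Rightarrow> ('a \<times> 'a) set \<Rightarrow> ('a \<Rightarrow> 'a \<Rightarrow> 'a) \<Rightarrow> ('a \<Rightarrow> 'a \<Rightarrow> 'a) \<Rightarrow> 'a \<Rightarrow> 'a set topology"
where
  "pr_zariski A S add mul z = topology_generated_by (pr_D A S add mul z ` A)"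

end

theory Submission
  imports Defs
begin

text \<open>If the basic sets \<open>D(b)\<close>, \<open>b \<in> B\<close>, cover \<open>D(a)\<close>, then no prime ideal contains
  the ideal generated by \<open>B\<close> while avoiding the powers of \<open>a\<close>. By the Krull-type argument
  (Zorn's lemma applied to ideals avoiding a multiplicative set) the ideal generated by \<open>B\<close>
  therefore contains some power \<open>a\<^sup>n\<close>. That power already lies in the ideal generated by a
  finite \<open>B\<^sub>0 \<subseteq> B\<close>, and then the \<open>D(b)\<close>, \<open>b \<in> B\<^sub>0\<close>, cover \<open>D(a)\<close>. Since the \<open>D(a)\<close> are
  closed under intersection, covers by open sets reduce to covers by basic sets, so every
  \<open>D(a)\<close> is quasi-compact, and so is \<open>X\<^sub>A = D(1)\<close>.\<close>

lemma generate_topology_on_Int_closed_base: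
  assumes Int_closed: "\<And>S T. S \<in> \<S> \<Longrightarrow> T \<in> \<S> \<Longrightarrow> S \<inter> T \<in> \<S>"
    and "generate_topology_on \<S> U" and "x \<in> U"
  shows "\<exists>B\<in>\<S>. x \<in> B \<and> B \<subseteq> U"
  using assms(2,3)
proof (induction arbitrary: x rule: generate_topology_on.induct)
  case (Int U V)
  then obtain B C where "B \<in> \<S>" "x \<in> B" "B \<subseteq> U" "C \<in> \<S>" "x \<in> C" "C \<subseteq> V"
    by blast
  moreover have "B \<inter> C \<in> \<S>"
    using Int_closed \<open>B \<in> \<S>\<close> \<open>C \<in> \<S>\<close> .
  ultimately show ?case
    by blast
next
  case (UN \<K>)
  then obtain V where "V \<in> \<K>" "x \<in> V"
    by blast
  then obtain B where "B \<in> \<S>" "x \<in> B" "B \<subseteq> V"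
    using UN.IH by blast
  then show ?case
    using \<open>V \<in> \<K>\<close> by blast
qed auto

lemma compactin_topology_generated_by_Int_closed:
  assumes Int_closed: "\<And>S T. S \<in> \<S> \<Longrightarrow> T \<in> \<S> \<Longrightarrow> S \<inter> T \<in> \<S>"
    and "K \<subseteq> \<Union>\<S>"
    and basic_covers: "\<And>\<C>. \<C> \<subseteq> \<S> \<Longrightarrow> K \<subseteq> \<Union>\<C> \<Longrightarrow> \<exists>\<F>. finite \<F> \<and> \<F> \<subseteq> \<C> \<and> K \<subseteq> \<Union>\<F>"
  shows "compactin (topology_generated_by \<S>) K"
  unfolding compactin_def
proof (intro conjI allI impI)
  show "K \<subseteq> topspace (topology_generated_by \<S>)"
    using assms(2) by simp
next
  fix \<U>
  assume \<U>: "(\<forall>U\<in>\<U>. openin (topology_generated_by \<S>) U) \<and> K \<subseteq> \<Union>\<U>"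
  define \<C> where "\<C> = {B \<in> \<S>. \<exists>U\<in>\<U>. B \<subseteq> U}"
  have K_cover: "K \<subseteq> \<Union>\<C>"
  proof
    fix x
    assume "x \<in> K"
    then obtain U where "U \<in> \<U>" "x \<in> U"
      using \<U> by blast
    then show "x \<in> \<Union>\<C>"
      using \<U> generate_topology_on_Int_closed_base[OF Int_closed]
      unfolding \<C>_def openin_topology_generated_by_iff by blast
  qed
  have "\<C> \<subseteq> \<S>"
    unfolding \<C>_def by blast
  then obtain \<F> where \<F>: "finite \<F>" "\<F> \<subseteq> \<C>" "K \<subseteq> \<Union>\<F>"
    using basic_covers[OF _ K_cover] by blast
  then have "\<forall>B\<in>\<F>. \<exists>U. U \<in> \<U> \<and> B \<subseteq> U"
    unfolding \<C>_def by blast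
  then obtain f where f: "\<And>B. B \<in> \<F> \<Longrightarrow> f B \<in> \<U> \<and> B \<subseteq> f B"
    by metis
  have "K \<subseteq> \<Union>(f ` \<F>)"
    using \<F>(3) f by blast
  then show "\<exists>\<F>'. finite \<F>' \<and> \<F>' \<subseteq> \<U> \<and> K \<subseteq> \<Union>\<F>'"
    using \<F>(1) f by (intro exI[of _ "f ` \<F>"]) auto
qed

locale pring =
  fixes A S add mul z u
  assumes partial_ring: "partial_ring A S add mul z u"
begin

abbreviation ideal where "ideal \<equiv> pr_ideal A S add mul z"
abbreviation prime_ideal where "prime_ideal \<equiv> pr_prime_ideal A S add mul z"
abbreviation Spec where "Spec \<equiv> pr_spec A S add mul z"
abbreviation D where "D \<equiv> pr_D A S add mul z"

lemma zero_closed: "z \<in> A"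
  using partial_ring unfolding partial_ring_def by (elim conjE) metis

lemma unit_closed: "u \<in> A"
  using partial_ring unfolding partial_ring_def by (elim conjE) metis

lemma add_closed:
  assumes "(a, b) \<in> S"
  shows "add a b \<in> A"
proof -
  have "\<forall>(a, b) \<in> S. add a b \<in> A"
    using partial_ring unfolding partial_ring_def by (elim conjE) assumption
  with assms show ?thesis
    by blast
qed

lemma mul_closed: "a \<in> A \<Longrightarrow> b \<in> A \<Longrightarrow> mul a b \<in> A"
  using partial_ring unfolding partial_ring_def by (elim conjE) metis

lemma mul_commute: "a \<in> A \<Longrightarrow> b \<in> A \<Longrightarrow> mul a b = mul b a"
  using partial_ring unfolding partial_ring_def by (elim conjE) metis

lemma mul_assoc: "a \<in> A \<Longrightarrow> b \<in> A \<Longrightarrow> c \<in> A \<Longrightarrow> mul (mul a b) c = mul a (mul b c)"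
  using partial_ring unfolding partial_ring_def by (elim conjE) metis

lemma mul_unit_left: "a \<in> A \<Longrightarrow> mul u a = a"
  using partial_ring unfolding partial_ring_def by (elim conjE) metis

lemma mul_zero_left: "a \<in> A \<Longrightarrow> mul z a = z"
  using partial_ring unfolding partial_ring_def by (elim conjE) metis

lemma summable_mul: "(a, b) \<in> S \<Longrightarrow> x \<in> A \<Longrightarrow> (mul a x, mul b x) \<in> S"
  using partial_ring unfolding partial_ring_def by (elim conjE) metis

lemma distrib: "(a, b) \<in> S \<Longrightarrow> x \<in> A \<Longrightarrow> mul (add a b) x = add (mul a x) (mul b x)"
  using partial_ring unfolding partial_ring_def by (elim conjE) metis

lemma mul_unit_right: "a \<in> A \<Longrightarrow> mul a u = a"
  using mul_commute mul_unit_left unit_closed by metis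

lemma ideal_carrier: "ideal A"
  unfolding pr_ideal_def using zero_closed add_closed mul_closed by blast

lemma ideal_subset: "ideal I \<Longrightarrow> I \<subseteq> A"
  unfolding pr_ideal_def by blast

lemma ideal_mul_right: "ideal I \<Longrightarrow> x \<in> I \<Longrightarrow> a \<in> A \<Longrightarrow> mul x a \<in> I"
  unfolding pr_ideal_def using mul_commute by (metis subsetD)

lemma ideal_eq_carrier_if_unit: "ideal I \<Longrightarrow> u \<in> I \<Longrightarrow> I = A"
  unfolding pr_ideal_def using mul_unit_right by (metis subsetI subset_antisym)

lemma ideal_Union_directed:
  assumes "\<I> \<noteq> {}" and ideals: "\<And>I. I \<in> \<I> \<Longrightarrow> ideal I"
    and directed: "\<And>I J. I \<in> \<I> \<Longrightarrow> J \<in> \<I> \<Longrightarrow> \<exists>K\<in>\<I>. I \<union> J \<subseteq> K"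
  shows "ideal (\<Union>\<I>)"
  unfolding pr_ideal_def
proof (intro conjI allI impI ballI)
  show "\<Union>\<I> \<subseteq> A" and "z \<in> \<Union>\<I>"
    using assms(1) ideals unfolding pr_ideal_def by blast+
next
  fix a b
  assume "(a, b) \<in> S \<and> a \<in> \<Union>\<I> \<and> b \<in> \<Union>\<I>"
  moreover from this obtain K where "K \<in> \<I>" "a \<in> K" "b \<in> K"
    using directed by (metis UnCI UnionE subsetD)
  ultimately show "add a b \<in> \<Union>\<I>"
    using ideals unfolding pr_ideal_def by blast
next
  show "mul a x \<in> \<Union>\<I>" if "a \<in> A" "x \<in> \<Union>\<I>" for a x
    using that ideals unfolding pr_ideal_def by blast
qed

lemma ideal_colon:
  assumes P: "ideal P" and t: "t \<in> A"
  shows "ideal {c \<in> A. mul c t \<in> P}"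
  unfolding pr_ideal_def
proof (intro conjI allI impI ballI)
  show "z \<in> {c \<in> A. mul c t \<in> P}"
    using P t zero_closed mul_zero_left unfolding pr_ideal_def by auto
  show "add a b \<in> {c \<in> A. mul c t \<in> P}"
    if "(a, b) \<in> S \<and> a \<in> {c \<in> A. mul c t \<in> P} \<and> b \<in> {c \<in> A. mul c t \<in> P}" for a b
    using that P t add_closed distrib summable_mul unfolding pr_ideal_def by auto
  show "mul a x \<in> {c \<in> A. mul c t \<in> P}" if "a \<in> A" "x \<in> {c \<in> A. mul c t \<in> P}" for a x
    using that P t mul_closed mul_assoc unfolding pr_ideal_def by auto
qed auto

definition ideal_span :: "'a set \<Rightarrow> 'a set" where
  "ideal_span X = \<Inter>{I. ideal I \<and> X \<subseteq> I}"

lemma ideal_span_least: "ideal I \<Longrightarrow> X \<subseteq> I \<Longrightarrow> ideal_span X \<subseteq> I"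
  unfolding ideal_span_def by blast

lemma ideal_span_superset: "X \<subseteq> ideal_span X"
  unfolding ideal_span_def by blast

lemma ideal_ideal_span:
  assumes "X \<subseteq> A"
  shows "ideal (ideal_span X)"
proof -
  have "ideal_span X \<subseteq> A"
    using ideal_span_least[OF ideal_carrier assms] .
  then show ?thesis
    unfolding ideal_span_def pr_ideal_def by blast
qed

lemma ideal_span_mono: "X \<subseteq> Y \<Longrightarrow> Y \<subseteq> A \<Longrightarrow> ideal_span X \<subseteq> ideal_span Y"
  by (meson ideal_ideal_span ideal_span_least ideal_span_superset order_trans)

lemma mem_ideal_span_finite:
  assumes B: "B \<subseteq> A" and x: "x \<in> ideal_span B"
  obtains B0 where "finite B0" "B0 \<subseteq> B" "x \<in> ideal_span B0"
proof -
  define \<I> where "\<I> = ideal_span ` {B0. finite B0 \<and> B0 \<subseteq> B}"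
  have span_ideal: "ideal (ideal_span B0)" if "B0 \<subseteq> B" for B0
    using that B by (meson ideal_ideal_span order_trans)
  have "ideal (\<Union>\<I>)"
  proof (rule ideal_Union_directed)
    show "\<I> \<noteq> {}"
      unfolding \<I>_def by auto
    show "ideal I" if "I \<in> \<I>" for I
      using that span_ideal unfolding \<I>_def by auto
    show "\<exists>K\<in>\<I>. I \<union> J \<subseteq> K" if "I \<in> \<I>" and "J \<in> \<I>" for I J
    proof -
      obtain B1 B2 where "finite B1" "B1 \<subseteq> B" "I = ideal_span B1"
        and "finite B2" "B2 \<subseteq> B" "J = ideal_span B2"
        using \<open>I \<in> \<I>\<close> \<open>J \<in> \<I>\<close> unfolding \<I>_def by auto
      moreover have "ideal_span (B1 \<union> B2) \<in> \<I>"
        using calculation unfolding \<I>_def by auto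
      moreover have "B1 \<union> B2 \<subseteq> A"
        using calculation B by blast
      ultimately show ?thesis
        using ideal_span_mono[of B1 "B1 \<union> B2"] ideal_span_mono[of B2 "B1 \<union> B2"] by auto
    qed
  qed
  moreover have "B \<subseteq> \<Union>\<I>"
  proof
    fix b
    assume "b \<in> B"
    then have "ideal_span {b} \<in> \<I>"
      unfolding \<I>_def by auto
    then show "b \<in> \<Union>\<I>"
      using ideal_span_superset by blast
  qed
  ultimately have "x \<in> \<Union>\<I>"
    using ideal_span_least x by blast
  then show ?thesis
    using that unfolding \<I>_def by auto
qed

lemma mul_mem_if_mem_ideal_span_insert:
  assumes P: "ideal P" and "x \<in> A" "t \<in> A" "mul x t \<in> P" and s: "s \<in> ideal_span (insert x P)"
  shows "mul s t \<in> P"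
proof -
  have "insert x P \<subseteq> {c \<in> A. mul c t \<in> P}"
    using assms ideal_mul_right unfolding pr_ideal_def by blast
  then have "ideal_span (insert x P) \<subseteq> {c \<in> A. mul c t \<in> P}"
    using ideal_span_least ideal_colon P \<open>t \<in> A\<close> by blast
  then show ?thesis
    using s by blast
qed

definition powers :: "'a \<Rightarrow> 'a set" where
  "powers a = range (\<lambda>n. (mul a ^^ n) u)"

lemma funpow_mul_closed: "a \<in> A \<Longrightarrow> (mul a ^^ n) u \<in> A"
  by (induction n) (simp_all add: unit_closed mul_closed)

lemma powers_subset: "a \<in> A \<Longrightarrow> powers a \<subseteq> A"
  unfolding powers_def using funpow_mul_closed by blast

lemma unit_mem_powers: "u \<in> powers a"
  unfolding powers_def by (metis funpow_0 rangeI)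

lemma mem_powers_self:
  assumes "a \<in> A"
  shows "a \<in> powers a"
proof -
  have "(mul a ^^ 1) u = a"
    using mul_unit_right[OF assms] by simp
  then show ?thesis
    unfolding powers_def by (metis rangeI)
qed

lemma powers_mul_closed:
  assumes a: "a \<in> A" and "s \<in> powers a" "t \<in> powers a"
  shows "mul s t \<in> powers a"
proof -
  have funpow_add: "(mul a ^^ (m + n)) u = mul ((mul a ^^ m) u) ((mul a ^^ n) u)" for m n
  proof (induction m)
    case 0
    show ?case
      by (simp add: a funpow_mul_closed mul_unit_left)
  next
    case (Suc m)
    then show ?case
      by (simp add: a funpow_mul_closed mul_assoc)
  qed
  obtain m n where "s = (mul a ^^ m) u" "t = (mul a ^^ n) u"
    using assms(2,3) unfolding powers_def by blast
  then have "mul s t = (mul a ^^ (m + n)) u"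
    by (simp add: funpow_add)
  then show ?thesis
    unfolding powers_def by (metis rangeI)
qed

lemma mem_prime_if_powers_meet:
  assumes P: "prime_ideal P" and a: "a \<in> A" and "P \<inter> powers a \<noteq> {}"
  shows "a \<in> P"
proof -
  obtain n where n: "(mul a ^^ n) u \<in> P"
    using assms(3) unfolding powers_def by blast
  have "u \<notin> P"
    using P ideal_eq_carrier_if_unit unfolding pr_prime_ideal_def by blast
  then show ?thesis
    using n
  proof (induction n)
    case (Suc n)
    then show ?case
      using P a funpow_mul_closed[OF a] unfolding pr_prime_ideal_def by auto
  qed simp
qed

lemma prime_if_maximal_avoiding:
  assumes P: "ideal P" "P \<inter> M = {}" and M: "M \<subseteq> A" "u \<in> M"
    and M_mul: "\<And>s t. s \<in> M \<Longrightarrow> t \<in> M \<Longrightarrow> mul s t \<in> M"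
    and maximal: "\<And>I. ideal I \<Longrightarrow> P \<subseteq> I \<Longrightarrow> I \<inter> M = {} \<Longrightarrow> I = P"
  shows "prime_ideal P"
proof -
  have meets: "\<exists>s\<in>M. s \<in> ideal_span (insert x P)" if "x \<in> A" and "x \<notin> P" for x
  proof (rule ccontr)
    assume "\<not> (\<exists>s\<in>M. s \<in> ideal_span (insert x P))"
    moreover have "ideal (ideal_span (insert x P))"
      using ideal_ideal_span ideal_subset[OF P(1)] \<open>x \<in> A\<close> by simp
    moreover have "P \<subseteq> ideal_span (insert x P)" and "x \<in> ideal_span (insert x P)"
      using ideal_span_superset by blast+
    ultimately show False
      using maximal[of "ideal_span (insert x P)"] \<open>x \<notin> P\<close> by blast
  qed
  show ?thesis
    unfolding pr_prime_ideal_def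
  proof (intro conjI ballI impI)
    show "ideal P"
      using P(1) .
    show "P \<noteq> A"
      using P(2) M by blast
    show "x \<in> P \<or> y \<in> P" if "x \<in> A" and "y \<in> A" and "mul x y \<in> P" for x y
    proof (rule ccontr)
      assume "\<not> (x \<in> P \<or> y \<in> P)"
      then obtain s t where s: "s \<in> M" "s \<in> ideal_span (insert x P)"
        and t: "t \<in> M" "t \<in> ideal_span (insert y P)"
        using meets \<open>x \<in> A\<close> \<open>y \<in> A\<close> by blast
      have "mul s y \<in> P"
        using mul_mem_if_mem_ideal_span_insert[OF P(1) \<open>x \<in> A\<close> \<open>y \<in> A\<close> \<open>mul x y \<in> P\<close> s(2)] .
      then have "mul y s \<in> P"
        using mul_commute \<open>y \<in> A\<close> s(1) M(1) by auto
      then have "mul t s \<in> P"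
        using mul_mem_if_mem_ideal_span_insert[OF P(1) \<open>y \<in> A\<close> _ _ t(2)] s(1) M(1) by blast
      then show False
        using M_mul[OF t(1) s(1)] P(2) by blast
    qed
  qed
qed

lemma prime_ideal_avoiding:
  assumes J: "ideal J" and M: "M \<subseteq> A" "u \<in> M"
    and M_mul: "\<And>s t. s \<in> M \<Longrightarrow> t \<in> M \<Longrightarrow> mul s t \<in> M"
    and disjoint: "J \<inter> M = {}"
  obtains P where "prime_ideal P" "J \<subseteq> P" "P \<inter> M = {}"
proof -
  define \<Z> where "\<Z> = {I. ideal I \<and> J \<subseteq> I \<and> I \<inter> M = {}}"
  have chain_Union: "\<Union>\<C> \<in> \<Z>" if "\<C> \<noteq> {}" and "subset.chain \<Z> \<C>" for \<C>
  proof -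
    have "\<C> \<subseteq> \<Z>" and linear: "\<And>I K. I \<in> \<C> \<Longrightarrow> K \<in> \<C> \<Longrightarrow> I \<subseteq> K \<or> K \<subseteq> I"
      using \<open>subset.chain \<Z> \<C>\<close> unfolding subset_chain_def by blast+
    have "ideal (\<Union>\<C>)"
    proof (rule ideal_Union_directed[OF \<open>\<C> \<noteq> {}\<close>])
      show "ideal I" if "I \<in> \<C>" for I
        using that \<open>\<C> \<subseteq> \<Z>\<close> unfolding \<Z>_def by blast
      show "\<exists>K\<in>\<C>. I \<union> I' \<subseteq> K" if "I \<in> \<C>" and "I' \<in> \<C>" for I I'
        using linear[OF that] that by (metis sup.order_iff sup_commute order_refl)
    qed
    moreover have "J \<subseteq> \<Union>\<C>" and "\<Union>\<C> \<inter> M = {}"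
      using \<open>\<C> \<noteq> {}\<close> \<open>\<C> \<subseteq> \<Z>\<close> unfolding \<Z>_def by auto
    ultimately show ?thesis
      unfolding \<Z>_def by blast
  qed
  have "J \<in> \<Z>"
    unfolding \<Z>_def using J disjoint by blast
  then obtain P where "P \<in> \<Z>" and maximal: "\<forall>I\<in>\<Z>. P \<subseteq> I \<longrightarrow> I = P"
    using subset_Zorn_nonempty[of \<Z>, OF _ chain_Union] by blast
  then have P: "ideal P" "J \<subseteq> P" "P \<inter> M = {}"
    unfolding \<Z>_def by auto
  have "prime_ideal P"
  proof (rule prime_if_maximal_avoiding[OF P(1,3) M M_mul])
    show "I = P" if "ideal I" and "P \<subseteq> I" and "I \<inter> M = {}" for I
      using maximal that P(2) unfolding \<Z>_def by blast
  qed
  then show thesis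
    using that P(2,3) by blast
qed

lemma prime_ideal_mul_iff:
  assumes P: "prime_ideal P" and "a \<in> A" "b \<in> A"
  shows "mul a b \<in> P \<longleftrightarrow> a \<in> P \<or> b \<in> P"
proof -
  have "ideal P"
    using P unfolding pr_prime_ideal_def by blast
  then have "a \<in> P \<or> b \<in> P \<Longrightarrow> mul a b \<in> P"
    using assms(2,3) ideal_mul_right unfolding pr_ideal_def by blast
  moreover have "mul a b \<in> P \<Longrightarrow> a \<in> P \<or> b \<in> P"
    using P assms(2,3) unfolding pr_prime_ideal_def by blast
  ultimately show ?thesis
    by blast
qed

lemma D_mul: "a \<in> A \<Longrightarrow> b \<in> A \<Longrightarrow> D (mul a b) = D a \<inter> D b"
  unfolding pr_D_def pr_spec_def using prime_ideal_mul_iff by auto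

lemma Spec_eq_D_unit: "Spec = D u"
  unfolding pr_D_def pr_spec_def pr_prime_ideal_def using ideal_eq_carrier_if_unit by blast

lemma ideal_span_meets_powers_if_D_cover:
  assumes a: "a \<in> A" and B: "B \<subseteq> A" and cover: "D a \<subseteq> (\<Union>b\<in>B. D b)"
  shows "ideal_span B \<inter> powers a \<noteq> {}"
proof
  assume "ideal_span B \<inter> powers a = {}"
  then obtain P where P: "prime_ideal P" "ideal_span B \<subseteq> P" "P \<inter> powers a = {}"
    using prime_ideal_avoiding[OF ideal_ideal_span[OF B] powers_subset[OF a]
        unit_mem_powers powers_mul_closed[OF a]] by blast
  then have "P \<in> D a"
    using mem_powers_self[OF a] unfolding pr_D_def pr_spec_def by blast
  then show False
    using cover P(2) ideal_span_superset unfolding pr_D_def by blast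
qed

lemma D_finite_subcover:
  assumes a: "a \<in> A" and B: "B \<subseteq> A" and "D a \<subseteq> (\<Union>b\<in>B. D b)"
  obtains B0 where "finite B0" "B0 \<subseteq> B" "D a \<subseteq> (\<Union>b\<in>B0. D b)"
proof -
  obtain s where "s \<in> ideal_span B" "s \<in> powers a"
    using ideal_span_meets_powers_if_D_cover[OF assms] by blast
  then obtain B0 where B0: "finite B0" "B0 \<subseteq> B" "s \<in> ideal_span B0"
    using mem_ideal_span_finite B by metis
  have "P \<in> (\<Union>b\<in>B0. D b)" if "P \<in> D a" for P
  proof (rule ccontr)
    assume "P \<notin> (\<Union>b\<in>B0. D b)"
    with that have "prime_ideal P" "a \<notin> P" "B0 \<subseteq> P"
      unfolding pr_D_def pr_spec_def by auto
    then show False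
      using ideal_span_least mem_prime_if_powers_meet[OF _ a] B0(3) \<open>s \<in> powers a\<close>
      unfolding pr_prime_ideal_def by blast
  qed
  then show thesis
    using that B0 by blast
qed

lemma compactin_D:
  assumes "a \<in> A"
  shows "compactin (pr_zariski A S add mul z) (D a)"
  unfolding pr_zariski_def
proof (rule compactin_topology_generated_by_Int_closed)
  show "U \<inter> V \<in> D ` A" if U: "U \<in> D ` A" and V: "V \<in> D ` A" for U V
  proof -
    obtain b c where "b \<in> A" "c \<in> A" "U = D b" "V = D c"
      using U V by blast
    then have "U \<inter> V = D (mul b c)"
      by (simp add: D_mul)
    then show ?thesis
      using \<open>b \<in> A\<close> \<open>c \<in> A\<close> mul_closed by blast
  qed
  show "D a \<subseteq> \<Union>(D ` A)"
    using assms by blast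
  show "\<exists>\<F>. finite \<F> \<and> \<F> \<subseteq> \<C> \<and> D a \<subseteq> \<Union>\<F>" if "\<C> \<subseteq> D ` A" and "D a \<subseteq> \<Union>\<C>" for \<C>
  proof -
    obtain B where B: "B \<subseteq> A" and \<C>: "\<C> = D ` B"
      using \<open>\<C> \<subseteq> D ` A\<close> unfolding subset_image_iff by blast
    have "D a \<subseteq> (\<Union>b\<in>B. D b)"
      using \<open>D a \<subseteq> \<Union>\<C>\<close> \<C> by simp
    then obtain B0 where "finite B0" "B0 \<subseteq> B" "D a \<subseteq> (\<Union>b\<in>B0. D b)"
      using D_finite_subcover[OF assms B] by blast
    then show ?thesis
      unfolding \<C> by (intro exI[of _ "D ` B0"] conjI finite_imageI image_mono)
  qed
qed

end

theorem mainTheorem10: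
  assumes "partial_ring A S add mul z u"
  shows "(\<forall>a \<in> A. compactin (pr_zariski A S add mul z) (pr_D A S add mul z a))
         \<and> compactin (pr_zariski A S add mul z) (pr_spec A S add mul z)"
proof -
  interpret pring A S add mul z u
    using assms by unfold_locales
  show ?thesis
    using compactin_D unit_closed unfolding Spec_eq_D_unit by blast
qed

end
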